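(* Let $G$ be a classical algebraic group over an algebraically closed field $k$ with natural module $V$ of dimension $n$. Let $C_1,\dots,C_e$ be conjugacy classes of $G$, $\Omega=C_1\times\dots\times C_e$, and let $\gamma_i$ be the dimension of the largest eigenspace on $V$ of an element of $C_i$. If $\sum_{i=1}^e\gamma_i>n(e-1)$, then no tuple $(x_1,\dots,x_e)\in\Omega$ generates a Zariski dense subgroup of $G$. *)

theory Defs
  imports "HOL-Computational_Algebra.Polynomial" "Jordan_Normal_Form.Matrix_Kernel"
    "Jordan_Normal_Form.Char_Poly"
begin

(* n x n matrices over k represent endomorphisms of the natural module V = k^n *)

definition symp_form :: "nat \<Rightarrow> 'a::field vec \<Rightarrow> 'a vec \<Rightarrow> 'a" where
  "symp_form n x y = (\<Sum>i<n div 2. x $ i * y $ (n - 1 - i) - x $ (n - 1 - i) * y $ i)"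

definition quad_form :: "nat \<Rightarrow> 'a::field vec \<Rightarrow> 'a" where
  "quad_form n x = (\<Sum>i<n div 2. x $ i * x $ (n - 1 - i))
      + (if odd n then x $ (n div 2) * x $ (n div 2) else 0)"

datatype classical_type = Linear | Symplectic | Orthogonal

(* rank of (1 - A), used for the Dickson invariant in characteristic 2 *)
definition rank_one_minus :: "nat \<Rightarrow> 'a::field mat \<Rightarrow> nat" where
  "rank_one_minus n A = n - kernel_dim (1\<^sub>m n - A)"

definition classical_group :: "classical_type \<Rightarrow> nat \<Rightarrow> 'a::field mat set" where
  "classical_group t n = (case t of
      Linear \<Rightarrow> {A \<in> carrier_mat n n. det A = 1}
    | Symplectic \<Rightarrow> {A \<in> carrier_mat n n. det A = 1 \<and>
         (\<forall>x \<in> carrier_vec n. \<forall>y \<in> carrier_vec n. symp_form n (A *\<^sub>v x) (A *\<^sub>v y) = symp_form n x y)}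
    | Orthogonal \<Rightarrow> {A \<in> carrier_mat n n.
         (\<forall>x \<in> carrier_vec n. quad_form n (A *\<^sub>v x) = quad_form n x) \<and>
         (if (2::'a) \<noteq> 0 then det A = 1 else even (rank_one_minus n A))})"

(* the data (type, n) for which the classical group is a genuine classical
   algebraic group SL_n, Sp_n, SO_n acting on its natural module *)
definition classical_data :: "classical_type \<Rightarrow> nat \<Rightarrow> 'a::field itself \<Rightarrow> bool" where
  "classical_data t n _ = (case t of
      Linear \<Rightarrow> n \<ge> 2
    | Symplectic \<Rightarrow> n \<ge> 2 \<and> even n
    | Orthogonal \<Rightarrow> n \<ge> 3 \<and> (odd n \<longrightarrow> (2::'a) \<noteq> 0))"

definition conj_class :: "nat \<Rightarrow> 'a::field mat set \<Rightarrow> 'a mat \<Rightarrow> 'a mat set" where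
  "conj_class n G g = {B. \<exists>h\<in>G. \<exists>h'\<in>G. h * h' = 1\<^sub>m n \<and> B = h * g * h'}"

definition eigenspace_dim :: "'a::field mat \<Rightarrow> 'a \<Rightarrow> nat" where
  "eigenspace_dim A lam = kernel_dim (char_matrix A lam)"

definition max_eigenspace_dim :: "'a::field mat \<Rightarrow> nat" where
  "max_eigenspace_dim A = Max {eigenspace_dim A lam | lam. eigenvalue A lam}"

(* polynomial functions in the matrix entries (coordinate ring of M_n(k)) *)
inductive_set mat_poly_fun :: "nat \<Rightarrow> ('a::field mat \<Rightarrow> 'a) set" for n where
  const: "(\<lambda>A. c) \<in> mat_poly_fun n"
| entry: "i < n \<Longrightarrow> j < n \<Longrightarrow> (\<lambda>A. A $$ (i, j)) \<in> mat_poly_fun n"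
| add: "f \<in> mat_poly_fun n \<Longrightarrow> g \<in> mat_poly_fun n \<Longrightarrow> (\<lambda>A. f A + g A) \<in> mat_poly_fun n"
| mult: "f \<in> mat_poly_fun n \<Longrightarrow> g \<in> mat_poly_fun n \<Longrightarrow> (\<lambda>A. f A * g A) \<in> mat_poly_fun n"

definition zariski_dense_in :: "nat \<Rightarrow> 'a::field mat set \<Rightarrow> 'a mat set \<Rightarrow> bool" where
  "zariski_dense_in n H G = (H \<subseteq> G \<and>
     (\<forall>f \<in> mat_poly_fun n. (\<forall>A \<in> H. f A = 0) \<longrightarrow> (\<forall>A \<in> G. f A = 0)))"

inductive_set gen_subgroup :: "nat \<Rightarrow> 'a::field mat set \<Rightarrow> 'a mat set" for n X where
  one: "1\<^sub>m n \<in> gen_subgroup n X"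
| gen: "A \<in> X \<Longrightarrow> A \<in> gen_subgroup n X"
| mult: "A \<in> gen_subgroup n X \<Longrightarrow> B \<in> gen_subgroup n X \<Longrightarrow> A * B \<in> gen_subgroup n X"
| inv: "A \<in> gen_subgroup n X \<Longrightarrow> B \<in> carrier_mat n n \<Longrightarrow> A * B = 1\<^sub>m n
          \<Longrightarrow> B \<in> gen_subgroup n X"

end

theory Submission
  imports Defs
begin

(* Conjugation preserves eigenspace dimensions, so x_i has an eigenspace E_i of dimension
   gamma_i. Each E_i has codimension n - gamma_i, and these codimensions add up to less than n,
   so the E_i meet in a nonzero vector v. Then the generated subgroup stabilizes the line kv.
   Stabilizing a given line is a polynomial condition (vanishing of the 2x2 minors of the
   n x 2 matrix [Av | v]), so the Zariski closure of the subgroup stabilizes kv too. But no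
   classical group stabilizes a line of its natural module: a suitable root element moves it. *)

subsection \<open>Common eigenvectors from a dimension count\<close>

lemma kernel_dim_le: "A \<in> carrier_mat nr nc \<Longrightarrow> kernel_dim A \<le> nc"
  unfolding kernel_dim_code by simp

lemma kernel_cut_out_by_linear_forms:
  fixes C :: "'a::field mat"
  assumes C: "C \<in> carrier_mat n n"
  obtains Ls where "set Ls \<subseteq> carrier_vec n" and "length Ls = n - kernel_dim C"
    and "\<And>x. x \<in> carrier_vec n \<Longrightarrow> \<forall>r\<in>set Ls. r \<bullet> x = 0 \<Longrightarrow> C *\<^sub>v x = 0\<^sub>v n"
proof -
  define R where "R = gauss_jordan_single C"
  note gj = gauss_jordan_single[OF C R_def[symmetric]]
  from gj(4) obtain P Q where RP: "R = P * C" and P: "P \<in> carrier_mat n n"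
    and Q: "Q \<in> carrier_mat n n" and QP: "Q * P = 1\<^sub>m n" by blast
  have R: "R \<in> carrier_mat n n" using gj(2) .
  let ?nonzero = "{i. i < n \<and> row R i \<noteq> 0\<^sub>v n}"
  interpret K: kernel n n R by (unfold_locales, rule R)
  have "mat_kernel C = mat_kernel R" using mat_kernel_mult_eq[OF C P Q QP] RP by simp
  then have "kernel_dim C = K.dim" unfolding kernel_dim_def using C by simp
  also have "\<dots> = n - card ?nonzero"
    using find_base_vectors[OF gj(3) R] by auto
  finally have kd: "kernel_dim C = n - card ?nonzero" .
  define Ls where "Ls = map (row R) (filter (\<lambda>i. row R i \<noteq> 0\<^sub>v n) [0..<n])"
  have "length Ls = card ?nonzero"
    unfolding Ls_def length_map length_filter_conv_card by (intro arg_cong[where f=card]) auto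
  moreover have "card ?nonzero \<le> n"
    by (rule order.trans[OF card_mono[of "{..<n}"]]) auto
  ultimately have "length Ls = n - kernel_dim C" using kd by simp
  moreover have "set Ls \<subseteq> carrier_vec n" unfolding Ls_def using R by auto
  moreover have "C *\<^sub>v x = 0\<^sub>v n" if x: "x \<in> carrier_vec n" and z: "\<forall>r\<in>set Ls. r \<bullet> x = 0" for x
  proof -
    have "(R *\<^sub>v x) $ i = 0" if i: "i < n" for i
    proof (cases "row R i = 0\<^sub>v n")
      case False
      then have "row R i \<in> set Ls" unfolding Ls_def using i by auto
      then show ?thesis using z i R by simp
    qed (use i R x in simp)
    then have "R *\<^sub>v x = 0\<^sub>v n" using R by (intro eq_vecI) auto
    then show ?thesis using gj(1)[OF x] by simp
  qed
  ultimately show ?thesis using that by blast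
qed

lemma few_linear_forms_common_zero:
  fixes Ls :: "'a::field vec list"
  assumes car: "set Ls \<subseteq> carrier_vec n" and len: "length Ls < n"
  obtains v where "v \<in> carrier_vec n" "v \<noteq> 0\<^sub>v n" "\<forall>r\<in>set Ls. r \<bullet> v = 0"
proof -
  define c where "c = (\<lambda>i. if i < length Ls then Ls ! i else 0\<^sub>v n)"
  define M where "M = mat\<^sub>r n n c"
  have c: "c \<in> {0..<n} \<rightarrow> carrier_vec n" unfolding c_def using car nth_mem by fastforce
  have "M = mat\<^sub>r n n (\<lambda>i. if i = n - 1 then 0\<^sub>v n else c i)"
    unfolding M_def c_def using len by (intro eq_matI) auto
  then have "det M = 0" using det_row_0[OF _ c, of "n - 1"] len by simp
  moreover have M: "M \<in> carrier_mat n n" unfolding M_def by simp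
  ultimately obtain v where v: "v \<in> carrier_vec n" "v \<noteq> 0\<^sub>v n" "M *\<^sub>v v = 0\<^sub>v n"
    using det_0_iff_vec_prod_zero_field[OF M] by blast
  have "r \<bullet> v = 0" if "r \<in> set Ls" for r
  proof -
    from that obtain i where i: "i < length Ls" "r = Ls ! i" by (auto simp: in_set_conv_nth)
    have "dim_vec (Ls ! i) = n" using car i nth_mem by fastforce
    then have "(M *\<^sub>v v) $ i = r \<bullet> v"
      using i len M unfolding M_def c_def by (subst index_mult_mat_vec) (auto simp: row_mat_of_row_fun)
    then show ?thesis using v(3) i len by simp
  qed
  then show ?thesis using that v by blast
qed

lemma common_eigenvector_of_large_eigenspaces:
  fixes A :: "nat \<Rightarrow> 'a::field mat" and lam :: "nat \<Rightarrow> 'a"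
  assumes car: "\<forall>i<e. A i \<in> carrier_mat n n"
    and large: "(\<Sum>i<e. int (eigenspace_dim (A i) (lam i))) > int n * (int e - 1)"
  obtains v where "v \<in> carrier_vec n" "v \<noteq> 0\<^sub>v n" "\<forall>i<e. A i *\<^sub>v v = lam i \<cdot>\<^sub>v v"
proof -
  let ?C = "\<lambda>i. char_matrix (A i) (lam i)"
  have C: "?C i \<in> carrier_mat n n" if "i < e" for i using car that by simp
  have "\<forall>i\<in>{..<e}. \<exists>Ls. set Ls \<subseteq> carrier_vec n \<and> length Ls = n - kernel_dim (?C i) \<and>
     (\<forall>y\<in>carrier_vec n. (\<forall>r\<in>set Ls. r \<bullet> y = 0) \<longrightarrow> ?C i *\<^sub>v y = 0\<^sub>v n)"
    using kernel_cut_out_by_linear_forms[OF C] by (metis lessThan_iff)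
  then obtain L where L: "\<And>i. i < e \<Longrightarrow> set (L i) \<subseteq> carrier_vec n \<and>
      length (L i) = n - kernel_dim (?C i) \<and>
      (\<forall>y\<in>carrier_vec n. (\<forall>r\<in>set (L i). r \<bullet> y = 0) \<longrightarrow> ?C i *\<^sub>v y = 0\<^sub>v n)"
    by (metis lessThan_iff)
  define Ls where "Ls = concat (map L [0..<e])"
  have carL: "set Ls \<subseteq> carrier_vec n" unfolding Ls_def using L by fastforce
  have "length Ls = (\<Sum>i<e. n - kernel_dim (?C i))" unfolding Ls_def length_concat
    using L by (simp add: interv_sum_list_conv_sum_set_nat atLeast0LessThan)
  then have "int (length Ls) = (\<Sum>i<e. int n - int (kernel_dim (?C i)))"
    using kernel_dim_le[OF C] by (simp add: of_nat_sum of_nat_diff)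
  also have "\<dots> = int n * int e - (\<Sum>i<e. int (eigenspace_dim (A i) (lam i)))"
    by (simp add: sum_subtractf eigenspace_dim_def mult.commute)
  finally have "length Ls < n" using large by (simp add: algebra_simps)
  from few_linear_forms_common_zero[OF carL this] obtain v where v: "v \<in> carrier_vec n" "v \<noteq> 0\<^sub>v n"
    and z: "\<forall>r\<in>set Ls. r \<bullet> v = 0" .
  have "A i *\<^sub>v v = lam i \<cdot>\<^sub>v v" if i: "i < e" for i
  proof -
    have "?C i *\<^sub>v v = 0\<^sub>v n" using L[OF i] z i v unfolding Ls_def by auto
    then have "eigenvector (A i) v (lam i)" using eigenvector_char_matrix[of "A i" n] car i v by simp
    then show ?thesis unfolding eigenvector_def by simp
  qed
  then show ?thesis using that v by blast
qed

lemma max_eigenspace_dim_attained: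
  fixes A :: "'a::alg_closed_field mat"
  assumes A: "A \<in> carrier_mat n n" and n: "n > 0"
  obtains lam where "eigenspace_dim A lam = max_eigenspace_dim A"
proof -
  let ?S = "{eigenspace_dim A lam | lam. eigenvalue A lam}"
  have "degree (char_poly A) = n" using degree_monic_char_poly[OF A] by simp
  then obtain lam where "poly (char_poly A) lam = 0"
    using alg_closed_imp_poly_has_root[of "char_poly A"] n by auto
  then have ne: "?S \<noteq> {}" using eigenvalue_root_char_poly[OF A] by blast
  have "?S \<subseteq> {..n}"
    unfolding eigenspace_dim_def using kernel_dim_le[OF char_matrix_closed[OF A]] by auto
  then have "finite ?S" by (rule finite_subset) simp
  from Max_in[OF this ne] show ?thesis using that unfolding max_eigenspace_dim_def by auto
qed

lemma eigenspace_dim_conj: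
  fixes g h h' :: "'a::field mat"
  assumes g: "g \<in> carrier_mat n n" and h: "h \<in> carrier_mat n n" and h': "h' \<in> carrier_mat n n"
    and hh: "h * h' = 1\<^sub>m n"
  shows "eigenspace_dim (h * g * h') lam = eigenspace_dim g lam"
proof -
  have "h * char_matrix g lam * h' = h * (g + (- lam) \<cdot>\<^sub>m 1\<^sub>m n) * h'"
    unfolding char_matrix_def using g by simp
  also have "\<dots> = (h * g + (- lam) \<cdot>\<^sub>m h) * h'"
    using g h by (simp add: mult_add_distrib_mat[of _ n n] mult_smult_distrib[OF h one_carrier_mat])
  also have "\<dots> = h * g * h' + (- lam) \<cdot>\<^sub>m (h * h')"
    using g h h' by (simp add: add_mult_distrib_mat[of _ n n] mult_smult_assoc_mat[of _ n n])
  also have "\<dots> = char_matrix (h * g * h') lam"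
    unfolding char_matrix_def hh using g h h' by simp
  finally have eq: "char_matrix (h * g * h') lam = h * char_matrix g lam * h'" ..
  have wit: "similar_mat_wit (char_matrix (h * g * h') lam) (char_matrix g lam) h h'"
    unfolding similar_mat_wit_def Let_def eq
    using g h h' hh mat_mult_left_right_inverse[OF h h' hh] by auto
  have "char_matrix (h * g * h') lam \<in> carrier_mat n n" "char_matrix g lam \<in> carrier_mat n n"
    using g h h' by simp_all
  with similar_mat_wit_kernel_dim[OF _ wit] show ?thesis
    unfolding eigenspace_dim_def kernel_dim_def by simp
qed

subsection \<open>Stabilizers of lines\<close>

definition stabilizes_line :: "'a::field mat \<Rightarrow> 'a vec \<Rightarrow> bool" where
  "stabilizes_line A v \<longleftrightarrow> (\<exists>c. A *\<^sub>v v = c \<cdot>\<^sub>v v)"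

lemma gen_subgroup_stabilizes_line:
  assumes X: "\<forall>B\<in>X. B \<in> carrier_mat n n \<and> stabilizes_line B v"
    and v: "v \<in> carrier_vec n" "v \<noteq> 0\<^sub>v n"
    and A: "A \<in> gen_subgroup n X"
  shows "A \<in> carrier_mat n n \<and> stabilizes_line A v"
  using A unfolding stabilizes_line_def
proof (induction rule: gen_subgroup.induct)
  case one
  show ?case using v by (intro conjI exI[of _ 1]) auto
next
  case (gen A)
  then show ?case using X unfolding stabilizes_line_def by blast
next
  case (mult A B)
  from mult.IH obtain c d where A: "A \<in> carrier_mat n n" "A *\<^sub>v v = c \<cdot>\<^sub>v v"
    and B: "B \<in> carrier_mat n n" "B *\<^sub>v v = d \<cdot>\<^sub>v v" by blast
  have "(A * B) *\<^sub>v v = d \<cdot>\<^sub>v (A *\<^sub>v v)" using A B v by (simp add: mult_mat_vec)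
  also have "\<dots> = (d * c) \<cdot>\<^sub>v v" using A by (simp add: smult_smult_assoc)
  finally show ?case using A B by auto
next
  case (inv A B)
  from inv.IH obtain c where A: "A \<in> carrier_mat n n" "A *\<^sub>v v = c \<cdot>\<^sub>v v" by blast
  have B: "B \<in> carrier_mat n n" by fact
  have "v = (B * A) *\<^sub>v v"
    using mat_mult_left_right_inverse[OF A(1) B inv.hyps(3)] v by simp
  also have "\<dots> = c \<cdot>\<^sub>v (B *\<^sub>v v)" using A B v by (simp add: mult_mat_vec)
  finally have vc: "v = c \<cdot>\<^sub>v (B *\<^sub>v v)" .
  moreover have "0 \<cdot>\<^sub>v (B *\<^sub>v v) = 0\<^sub>v n" using B by (intro eq_vecI) auto
  ultimately have "c \<noteq> 0" using v(2) by auto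
  have "inverse c \<cdot>\<^sub>v v = (inverse c * c) \<cdot>\<^sub>v (B *\<^sub>v v)" by (subst vc) (simp add: smult_smult_assoc)
  with \<open>c \<noteq> 0\<close> have "B *\<^sub>v v = inverse c \<cdot>\<^sub>v v" by simp
  then show ?case using B by blast
qed

definition line_minor :: "nat \<Rightarrow> 'a::field vec \<Rightarrow> nat \<Rightarrow> nat \<Rightarrow> 'a mat \<Rightarrow> 'a" where
  "line_minor n v r p A =
     (\<Sum>b\<in>{0..<n}. A $$ (r, b) * v $ b) * v $ p - (\<Sum>b\<in>{0..<n}. A $$ (p, b) * v $ b) * v $ r"

lemma mat_poly_fun_sum:
  "finite T \<Longrightarrow> \<forall>j\<in>T. f j \<in> mat_poly_fun n \<Longrightarrow> (\<lambda>A. \<Sum>j\<in>T. f j A) \<in> mat_poly_fun n"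
proof (induction T rule: finite_induct)
  case empty
  then show ?case using mat_poly_fun.const[of 0 n] by simp
next
  case (insert x F)
  then show ?case using mat_poly_fun.add[of "f x" n "\<lambda>A. \<Sum>j\<in>F. f j A"] by simp
qed

lemma mat_poly_fun_diff:
  assumes "f \<in> mat_poly_fun n" "g \<in> mat_poly_fun n"
  shows "(\<lambda>A. f A - g A) \<in> mat_poly_fun n"
  using mat_poly_fun.add[OF assms(1) mat_poly_fun.mult[OF mat_poly_fun.const assms(2)], of "- 1"]
  by simp

lemma line_minor_poly_fun:
  assumes "r < n" "p < n"
  shows "line_minor n v r p \<in> mat_poly_fun n"
proof -
  have row: "(\<lambda>A. \<Sum>b\<in>{0..<n}. A $$ (q, b) * v $ b) \<in> mat_poly_fun n" if "q < n" for q
    by (rule mat_poly_fun_sum)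
      (auto intro!: mat_poly_fun.mult[OF mat_poly_fun.entry mat_poly_fun.const] that)
  show ?thesis unfolding line_minor_def
    by (rule mat_poly_fun_diff; rule mat_poly_fun.mult[OF row mat_poly_fun.const]) (use assms in auto)
qed

lemma line_minor_eq:
  assumes "A \<in> carrier_mat n n" "v \<in> carrier_vec n" "r < n" "p < n"
  shows "line_minor n v r p A = (A *\<^sub>v v) $ r * v $ p - (A *\<^sub>v v) $ p * v $ r"
  unfolding line_minor_def using assms by (simp add: scalar_prod_def)

lemma zariski_dense_stabilizes_line:
  assumes dense: "zariski_dense_in n H G" and G: "G \<subseteq> carrier_mat n n"
    and v: "v \<in> carrier_vec n" "v \<noteq> 0\<^sub>v n"
    and H: "\<forall>A\<in>H. stabilizes_line A v"
    and W: "W \<in> G"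
  shows "stabilizes_line W v"
proof -
  from v obtain p where p: "p < n" "v $ p \<noteq> 0" by force
  have Wc: "W \<in> carrier_mat n n" using W G by blast
  have "(W *\<^sub>v v) $ r * v $ p = (W *\<^sub>v v) $ p * v $ r" if r: "r < n" for r
  proof -
    have "line_minor n v r p A = 0" if "A \<in> H" for A
    proof -
      from H that obtain c where "A *\<^sub>v v = c \<cdot>\<^sub>v v" unfolding stabilizes_line_def by blast
      moreover have "A \<in> carrier_mat n n" using dense G that unfolding zariski_dense_in_def by blast
      ultimately show ?thesis using v(1) r p(1) by (simp add: line_minor_eq algebra_simps)
    qed
    then have "line_minor n v r p W = 0"
      using dense line_minor_poly_fun[OF r p(1)] W unfolding zariski_dense_in_def by blast
    then show ?thesis using line_minor_eq[OF Wc v(1) r p(1)] by simp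
  qed
  then have "W *\<^sub>v v = ((W *\<^sub>v v) $ p / v $ p) \<cdot>\<^sub>v v"
    using Wc v p by (intro eq_vecI) (auto simp: field_simps)
  then show ?thesis unfolding stabilizes_line_def by blast
qed

lemma not_stabilizes_line_by_coordinates:
  assumes "v \<in> carrier_vec n" "p < n" "r < n" "v $ p \<noteq> 0"
    and "(W *\<^sub>v v) $ p = v $ p" "(W *\<^sub>v v) $ r \<noteq> v $ r"
  shows "\<not> stabilizes_line W v"
proof
  assume "stabilizes_line W v"
  then obtain c where c: "W *\<^sub>v v = c \<cdot>\<^sub>v v" unfolding stabilizes_line_def by blast
  with assms have "c * v $ p = v $ p" by simp
  then have "c = 1" using \<open>v $ p \<noteq> 0\<close> by simp
  with c assms show False by simp
qed

subsection \<open>No classical group stabilizes a line\<close>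

lemma addrow_mult_vec:
  fixes x :: "'a::comm_ring_1 vec"
  assumes x: "x \<in> carrier_vec n" and k: "k < n" and l: "l < n"
  shows "addrow_mat n a k l *\<^sub>v x = vec n (\<lambda>i. if i = k then x $ i + a * x $ l else x $ i)"
  using x k l by (intro eq_vecI)
    (auto simp: row_addrow add_scalar_prod_distrib[of _ n] smult_scalar_prod_distrib[of _ n])

lemma addrow_not_stabilizes_line:
  fixes v :: "'a::field vec"
  assumes "v \<in> carrier_vec n" "k < n" "p < n" "k \<noteq> p" "v $ p \<noteq> 0"
  shows "\<not> stabilizes_line (addrow_mat n 1 k p) v"
  using assms by (intro not_stabilizes_line_by_coordinates[of v n p k]) (auto simp: addrow_mult_vec)

lemma addrow_mirror_preserves_symp_form:
  fixes x y :: "'a::field vec"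
  assumes n: "even n" and p: "p < n" and x: "x \<in> carrier_vec n" and y: "y \<in> carrier_vec n"
  shows "symp_form n (addrow_mat n a (n - 1 - p) p *\<^sub>v x) (addrow_mat n a (n - 1 - p) p *\<^sub>v y)
    = symp_form n x y"
proof -
  have k: "n - 1 - p < n" using p by simp
  show ?thesis
    unfolding addrow_mult_vec[OF x k p] addrow_mult_vec[OF y k p] symp_form_def
  proof (intro sum.cong refl)
    fix i assume "i \<in> {..<n div 2}"
    then have "i < n" "n - 1 - i < n" "n - 1 - i \<noteq> i"
      "(n - 1 - i = n - 1 - p) = (i = p)" "(i = n - 1 - p) = (n - 1 - i = p)"
      using n p by auto
    then show "vec n (\<lambda>i. if i = n - 1 - p then x $ i + a * x $ p else x $ i) $ i *
          vec n (\<lambda>i. if i = n - 1 - p then y $ i + a * y $ p else y $ i) $ (n - 1 - i) -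
          vec n (\<lambda>i. if i = n - 1 - p then x $ i + a * x $ p else x $ i) $ (n - 1 - i) *
          vec n (\<lambda>i. if i = n - 1 - p then y $ i + a * y $ p else y $ i) $ i =
          x $ i * y $ (n - 1 - i) - x $ (n - 1 - i) * y $ i"
      by (auto simp: algebra_simps)
  qed
qed

lemma SL_stabilizes_no_line:
  fixes v :: "'a::field vec"
  assumes n: "n \<ge> 2" and v: "v \<in> carrier_vec n" "v \<noteq> 0\<^sub>v n"
  shows "\<exists>W\<in>classical_group Linear n. \<not> stabilizes_line W v"
proof -
  from v obtain p where p: "p < n" "v $ p \<noteq> 0" by force
  define k where "k = (if p = 0 then 1 else (0::nat))"
  have k: "k < n" "k \<noteq> p" unfolding k_def using n by auto
  have "addrow_mat n 1 k p \<in> classical_group Linear n"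
    unfolding classical_group_def using det_addrow_mat[OF k(2)] by simp
  with addrow_not_stabilizes_line[OF v(1) k(1) p(1) k(2) p(2)] show ?thesis by blast
qed

lemma Sp_stabilizes_no_line:
  fixes v :: "'a::field vec"
  assumes n: "even n" and v: "v \<in> carrier_vec n" "v \<noteq> 0\<^sub>v n"
  shows "\<exists>W\<in>classical_group Symplectic n. \<not> stabilizes_line W v"
proof -
  from v obtain p where p: "p < n" "v $ p \<noteq> 0" by force
  have k: "n - 1 - p < n" "n - 1 - p \<noteq> p" using n p by (simp, presburger)
  have "det (addrow_mat n (1::'a) (n - 1 - p) p) = 1" by (rule det_addrow_mat[OF k(2)])
  moreover have "\<forall>x\<in>carrier_vec n. \<forall>y\<in>carrier_vec n. symp_form n (addrow_mat n (1::'a) (n - 1 - p) p *\<^sub>v x)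
      (addrow_mat n 1 (n - 1 - p) p *\<^sub>v y) = symp_form n x y"
    using addrow_mirror_preserves_symp_form[OF n p(1)] by blast
  ultimately have "(addrow_mat n 1 (n - 1 - p) p :: 'a mat) \<in> classical_group Symplectic n"
    unfolding classical_group_def by simp
  with addrow_not_stabilizes_line[OF v(1) k(1) p(1) k(2) p(2)] show ?thesis by blast
qed

lemma sum_lower_half_mirror_pair:
  fixes c :: "'a::comm_ring_1" and i n :: nat
  assumes "i < n" "i \<noteq> n - 1 - i"
  shows "(\<Sum>j<n div 2. if j = i \<or> j = n - 1 - i then c else 0) = c"
proof -
  have "(\<Sum>j<n div 2. if j = i \<or> j = n - 1 - i then c else 0) =
        (\<Sum>j<n div 2. if j = min i (n - 1 - i) then c else 0)"
    using assms by (intro sum.cong refl) (auto simp: min_def)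
  moreover have "min i (n - 1 - i) < n div 2" using assms by (auto simp: min_def)
  then have "(\<Sum>j<n div 2. if j = min i (n - 1 - i) then c else 0) = c" by simp
  ultimately show ?thesis by simp
qed

lemma kernel_dim_coordinate_pair:
  fixes M :: "'a::field mat"
  assumes M: "M \<in> carrier_mat n n" and c: "c1 < c2" "c2 < n"
    and K: "mat_kernel M = {x \<in> carrier_vec n. x $ c1 = 0 \<and> x $ c2 = 0}"
  shows "kernel_dim M = n - 2"
proof -
  define D :: "'a mat" where
    "D = mat n n (\<lambda>(i, j). if (i = 0 \<and> j = c1) \<or> (i = 1 \<and> j = c2) then 1 else 0)"
  have D: "D \<in> carrier_mat n n" unfolding D_def by simp
  have rows: "row D i = (if i = 0 then unit_vec n c1 else if i = 1 then unit_vec n c2 else 0\<^sub>v n)"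
    if "i < n" for i
    unfolding D_def using that c by (intro eq_vecI) auto
  have "mat_kernel D = {x \<in> carrier_vec n. x $ c1 = 0 \<and> x $ c2 = 0}"
  proof -
    have "D *\<^sub>v x = 0\<^sub>v n \<longleftrightarrow> x $ c1 = 0 \<and> x $ c2 = 0" if x: "x \<in> carrier_vec n" for x
    proof -
      have "(D *\<^sub>v x) $ i = (if i = 0 then x $ c1 else if i = 1 then x $ c2 else 0)" if "i < n" for i
        using rows[OF that] that x c D by (auto simp: scalar_prod_left_unit)
      then show ?thesis using c D by (auto simp: vec_eq_iff)
    qed
    then show ?thesis using mat_kernel[OF D] by auto
  qed
  then have KD: "mat_kernel D = mat_kernel M" using K by simp
  have "pivot_fun D (\<lambda>i. if i = 0 then c1 else if i = 1 then c2 else n) n"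
    unfolding pivot_fun_def Let_def using c unfolding D_def by auto
  then have ref: "row_echelon_form D" unfolding row_echelon_form_def using D by auto
  have "unit_vec n c \<noteq> (0\<^sub>v n :: 'a vec)" if "c < n" for c
    using that by (metis index_unit_vec(1) index_zero_vec(1) one_neq_zero)
  then have "{i. i < n \<and> row D i \<noteq> 0\<^sub>v n} = {0, 1}" using rows c by auto
  moreover interpret K: kernel n n D by (unfold_locales, rule D)
  have "kernel_dim M = K.dim" unfolding kernel_dim_def using M KD by simp
  ultimately show ?thesis using find_base_vectors[OF ref D] by simp
qed

text \<open>Root elements of \<open>SO_n\<close> for the form \<open>\<Sum> x\<^sub>i x\<^sub>n\<^sub>-\<^sub>1\<^sub>-\<^sub>i\<close>: a long one for \<open>n\<close> even, where
  \<open>a\<close>, \<open>b\<close>, \<open>n-1-a\<close>, \<open>n-1-b\<close> are distinct, and a short one for \<open>n\<close> odd, which moves the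
  middle coordinate.\<close>

definition orth_long_root :: "nat \<Rightarrow> nat \<Rightarrow> nat \<Rightarrow> 'a::comm_ring_1 mat" where
  "orth_long_root n a b = addrow_mat n 1 a (n - 1 - b) * addrow_mat n (- 1) b (n - 1 - a)"

definition orth_short_root :: "nat \<Rightarrow> nat \<Rightarrow> 'a::comm_ring_1 mat" where
  "orth_short_root n i =
     addrow_mat n 1 (n div 2) (n - 1 - i) * addrow_mat n (- 2) i (n div 2) * addrow_mat n (- 1) i (n - 1 - i)"

context
  fixes n a b :: nat
  assumes n: "even n" and a: "a < n" and b: "b < n" and ab: "a \<noteq> b" "a \<noteq> n - 1 - b"
begin

lemma orth_long_root_carrier: "orth_long_root n a b \<in> carrier_mat n n"
  unfolding orth_long_root_def by (rule mult_carrier_mat[OF addrow_mat_carrier addrow_mat_carrier])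

lemma orth_long_root_det: "det (orth_long_root n a b :: 'a::comm_ring_1 mat) = 1"
proof -
  have "a \<noteq> n - 1 - b" "b \<noteq> n - 1 - a" using a b ab by auto
  then show ?thesis unfolding orth_long_root_def
    by (simp add: det_mult[OF addrow_mat_carrier addrow_mat_carrier] det_addrow_mat)
qed

lemma orth_long_root_mult_vec:
  fixes x :: "'a::comm_ring_1 vec"
  assumes x: "x \<in> carrier_vec n"
  shows "orth_long_root n a b *\<^sub>v x = vec n (\<lambda>j. if j = a then x $ j + x $ (n - 1 - b)
     else if j = b then x $ j - x $ (n - 1 - a) else x $ j)"
proof -
  have a': "n - 1 - a < n" and b': "n - 1 - b < n" "n - 1 - b \<noteq> b" using a b n by auto presburger
  have "orth_long_root n a b *\<^sub>v x
      = addrow_mat n 1 a (n - 1 - b) *\<^sub>v (addrow_mat n (- 1) b (n - 1 - a) *\<^sub>v x)"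
    unfolding orth_long_root_def by (rule assoc_mult_mat_vec[OF addrow_mat_carrier addrow_mat_carrier x])
  also have "\<dots> = addrow_mat n 1 a (n - 1 - b) *\<^sub>v
      vec n (\<lambda>i. if i = b then x $ i + (- 1) * x $ (n - 1 - a) else x $ i)"
    using addrow_mult_vec[OF x b a'] by simp
  also have "\<dots> = vec n (\<lambda>j. if j = a then x $ j + x $ (n - 1 - b)
     else if j = b then x $ j - x $ (n - 1 - a) else x $ j)"
    using a b ab b' by (subst addrow_mult_vec) (auto intro!: eq_vecI)
  finally show ?thesis .
qed

lemma orth_long_root_quad_form:
  fixes x :: "'a::field vec"
  assumes x: "x \<in> carrier_vec n"
  shows "quad_form n (orth_long_root n a b *\<^sub>v x) = quad_form n x"
proof -
  let ?X = "orth_long_root n a b *\<^sub>v x"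
  let ?a = "n - 1 - a" and ?b = "n - 1 - b"
  have pt: "?X $ j * ?X $ (n - 1 - j) = x $ j * x $ (n - 1 - j)
      + (if j = a \<or> j = ?a then x $ ?b * x $ ?a else 0)
      - (if j = b \<or> j = ?b then x $ ?a * x $ ?b else 0)" if j: "j < n div 2" for j
  proof -
    have j1: "j < n" "n - 1 - j < n" "n - 1 - j \<noteq> j" using j n by auto
    have e: "(n - 1 - j = a) = (j = ?a)" "(n - 1 - j = b) = (j = ?b)" "n - 1 - (n - 1 - j) = j"
      using j1 a b by auto
    have f: "?a \<noteq> a" "?b \<noteq> b" "?a \<noteq> b" "?b \<noteq> a" "?a \<noteq> ?b"
      using n a b ab by auto presburger+
    show ?thesis unfolding orth_long_root_mult_vec[OF x] using j1 e f ab by (auto simp: algebra_simps)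
  qed
  have ne: "a \<noteq> ?a" "b \<noteq> ?b" using n a b by presburger+
  have "(\<Sum>j<n div 2. ?X $ j * ?X $ (n - 1 - j)) = (\<Sum>j<n div 2. x $ j * x $ (n - 1 - j))
      + (\<Sum>j<n div 2. if j = a \<or> j = ?a then x $ ?b * x $ ?a else 0)
      - (\<Sum>j<n div 2. if j = b \<or> j = ?b then x $ ?a * x $ ?b else 0)"
    using pt by (simp add: sum.distrib sum_subtractf)
  also have "\<dots> = (\<Sum>j<n div 2. x $ j * x $ (n - 1 - j))"
    unfolding sum_lower_half_mirror_pair[OF a ne(1)] sum_lower_half_mirror_pair[OF b ne(2)]
    by (simp add: mult.commute)
  finally show ?thesis unfolding quad_form_def using n by simp
qed

lemma orth_long_root_rank_one_minus:
  "rank_one_minus n (orth_long_root n a b :: 'a::field mat) = 2"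
proof -
  let ?a = "n - 1 - a" and ?b = "n - 1 - b"
  let ?M = "1\<^sub>m n - (orth_long_root n a b :: 'a mat)"
  have M: "?M \<in> carrier_mat n n" by (rule minus_carrier_mat[OF orth_long_root_carrier])
  have f: "?a < n" "?b < n" "?a \<noteq> ?b" "n \<ge> 2" using a b ab by auto
  have Mx: "?M *\<^sub>v x = vec n (\<lambda>j. if j = a then - x $ ?b else if j = b then x $ ?a else 0)"
    if x: "x \<in> carrier_vec n" for x :: "'a vec"
    using minus_mult_distrib_mat_vec[OF one_carrier_mat orth_long_root_carrier x] x
    unfolding orth_long_root_mult_vec[OF x] by (intro eq_vecI) auto
  have "?M *\<^sub>v x = 0\<^sub>v n \<longleftrightarrow> x $ min ?a ?b = 0 \<and> x $ max ?a ?b = 0"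
    if x: "x \<in> carrier_vec n" for x
  proof
    assume "?M *\<^sub>v x = 0\<^sub>v n"
    then have "(?M *\<^sub>v x) $ a = 0" "(?M *\<^sub>v x) $ b = 0" using a b by auto
    then show "x $ min ?a ?b = 0 \<and> x $ max ?a ?b = 0"
      using Mx[OF x] a b ab by (auto simp: min_def max_def)
  next
    assume "x $ min ?a ?b = 0 \<and> x $ max ?a ?b = 0"
    then have "x $ ?b = 0" "x $ ?a = 0" by (auto simp: min_def max_def split: if_splits)
    then show "?M *\<^sub>v x = 0\<^sub>v n" unfolding Mx[OF x] by (intro eq_vecI) auto
  qed
  then have "mat_kernel ?M = {x \<in> carrier_vec n. x $ min ?a ?b = 0 \<and> x $ max ?a ?b = 0}"
    using mat_kernel[OF M] by auto
  from kernel_dim_coordinate_pair[OF M _ _ this] show ?thesis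
    unfolding rank_one_minus_def using f by auto
qed

lemma orth_long_root_in_SO: "(orth_long_root n a b :: 'a::field mat) \<in> classical_group Orthogonal n"
  unfolding classical_group_def
  by (simp add: orth_long_root_carrier orth_long_root_det orth_long_root_quad_form
      orth_long_root_rank_one_minus)

end

context
  fixes n i :: nat
  assumes n: "odd n" and i: "i < n" and im: "i \<noteq> n div 2"
begin

lemma orth_short_root_indices: "n div 2 < n" "n - 1 - i < n" "n - 1 - i \<noteq> n div 2" "i \<noteq> n - 1 - i"
  using n i im by (auto elim!: oddE)

lemma orth_short_root_carrier: "orth_short_root n i \<in> carrier_mat n n"
  unfolding orth_short_root_def
  by (rule mult_carrier_mat[OF mult_carrier_mat[OF addrow_mat_carrier addrow_mat_carrier] addrow_mat_carrier])

lemma orth_short_root_det: "det (orth_short_root n i :: 'a::comm_ring_1 mat) = 1"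
  unfolding orth_short_root_def using orth_short_root_indices im
  by (simp add: det_mult[OF mult_carrier_mat[OF addrow_mat_carrier addrow_mat_carrier] addrow_mat_carrier]
      det_mult[OF addrow_mat_carrier addrow_mat_carrier] det_addrow_mat)

lemma orth_short_root_mult_vec:
  fixes x :: "'a::comm_ring_1 vec"
  assumes x: "x \<in> carrier_vec n"
  shows "orth_short_root n i *\<^sub>v x =
    vec n (\<lambda>j. if j = i then x $ j - x $ (n - 1 - i) - 2 * x $ (n div 2)
      else if j = n div 2 then x $ j + x $ (n - 1 - i) else x $ j)"
proof -
  note f = orth_short_root_indices
  have "addrow_mat n (- 1) i (n - 1 - i) *\<^sub>v x \<in> carrier_vec n"
    by (rule mult_mat_vec_carrier[OF addrow_mat_carrier x])
  then show ?thesis unfolding orth_short_root_def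
    using x f i im
    by (subst assoc_mult_mat_vec[OF mult_carrier_mat[OF addrow_mat_carrier addrow_mat_carrier] addrow_mat_carrier x],
        subst assoc_mult_mat_vec[OF addrow_mat_carrier addrow_mat_carrier])
      (auto simp: addrow_mult_vec algebra_simps intro!: eq_vecI)
qed

lemma orth_short_root_quad_form:
  fixes x :: "'a::field vec"
  assumes x: "x \<in> carrier_vec n"
  shows "quad_form n (orth_short_root n i *\<^sub>v x) = quad_form n x"
proof -
  note f = orth_short_root_indices
  let ?X = "orth_short_root n i *\<^sub>v x"
  let ?m = "n div 2" and ?p = "n - 1 - i"
  have pt: "?X $ j * ?X $ (n - 1 - j) = x $ j * x $ (n - 1 - j)
      + (if j = i \<or> j = ?p then (- x $ ?p - 2 * x $ ?m) * x $ ?p else 0)"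
    if j: "j < n div 2" for j
  proof -
    have "j < n" "n - 1 - j < n" "n - 1 - j \<noteq> j" "j \<noteq> ?m" "n - 1 - j \<noteq> ?m"
      "(n - 1 - j = i) = (j = ?p)" "(n - 1 - j = ?p) = (j = i)"
      using j n i by (auto elim!: oddE)
    then show ?thesis unfolding orth_short_root_mult_vec[OF x] using f by (auto simp: algebra_simps)
  qed
  have "(\<Sum>j<n div 2. ?X $ j * ?X $ (n - 1 - j)) = (\<Sum>j<n div 2. x $ j * x $ (n - 1 - j))
      + (\<Sum>j<n div 2. if j = i \<or> j = ?p then (- x $ ?p - 2 * x $ ?m) * x $ ?p else 0)"
    using pt by (simp add: sum.distrib)
  also have "(\<Sum>j<n div 2. if j = i \<or> j = ?p then (- x $ ?p - 2 * x $ ?m) * x $ ?p else 0)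
      = (- x $ ?p - 2 * x $ ?m) * x $ ?p"
    by (rule sum_lower_half_mirror_pair[OF i f(4)])
  moreover have "?X $ ?m = x $ ?m + x $ ?p" unfolding orth_short_root_mult_vec[OF x] using f im by simp
  ultimately show ?thesis unfolding quad_form_def using n by (simp add: algebra_simps)
qed

lemma orth_short_root_in_SO:
  assumes "(2::'a::field) \<noteq> 0"
  shows "(orth_short_root n i :: 'a mat) \<in> classical_group Orthogonal n"
  unfolding classical_group_def
  using assms by (simp add: orth_short_root_carrier orth_short_root_det orth_short_root_quad_form)

end

lemma SO_even_stabilizes_no_line:
  fixes v :: "'a::field vec"
  assumes n: "even n" "n \<ge> 4" and v: "v \<in> carrier_vec n" "v \<noteq> 0\<^sub>v n"
  shows "\<exists>W\<in>classical_group Orthogonal n. \<not> stabilizes_line W v"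
proof -
  from v obtain p where p: "p < n" "v $ p \<noteq> 0" by force
  define a where "a = (if p = 0 \<or> p = n - 1 then 1 else (0::nat))"
  define b where "b = n - 1 - p"
  have "n - 1 - p \<noteq> p" using n p(1) by presburger
  then have ab: "a < n" "b < n" "a \<noteq> b" "a \<noteq> n - 1 - b" "n - 1 - b = p" "p \<noteq> a" "p \<noteq> b"
    unfolding a_def b_def using n p(1) by auto
  have "\<not> stabilizes_line (orth_long_root n a b) v"
    using ab p v by (intro not_stabilizes_line_by_coordinates[of v n p a])
      (auto simp: orth_long_root_mult_vec[OF n(1) ab(1-4)])
  with orth_long_root_in_SO[OF n(1) ab(1-4)] show ?thesis by blast
qed

text \<open>If \<open>v\<close> is supported on the middle coordinate \<open>m\<close>, the short root element with \<open>i = 0\<close>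
  changes coordinate \<open>0\<close> by \<open>-2 v\<^sub>m\<close> (this is where \<open>2 \<noteq> 0\<close> is needed); otherwise the one with
  \<open>n - 1 - i = q\<close> fixes a nonzero coordinate \<open>q \<noteq> m\<close> and changes coordinate \<open>m\<close> by \<open>v\<^sub>q\<close>.\<close>

lemma SO_odd_stabilizes_no_line:
  fixes v :: "'a::field vec"
  assumes n: "odd n" "n \<ge> 3" and two: "(2::'a) \<noteq> 0" and v: "v \<in> carrier_vec n" "v \<noteq> 0\<^sub>v n"
  shows "\<exists>W\<in>classical_group Orthogonal n. \<not> stabilizes_line W v"
proof -
  let ?m = "n div 2"
  have m: "?m < n" "0 \<noteq> ?m" "n - 1 \<noteq> ?m" using n by (auto elim!: oddE)
  show ?thesis
  proof (cases "\<exists>q<n. q \<noteq> ?m \<and> v $ q \<noteq> 0")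
    case True
    then obtain q where q: "q < n" "q \<noteq> ?m" "v $ q \<noteq> 0" by blast
    define i where "i = n - 1 - q"
    have i: "i < n" "i \<noteq> ?m" "n - 1 - i = q" "q \<noteq> i"
      unfolding i_def using q n by (auto elim!: oddE)
    have "\<not> stabilizes_line (orth_short_root n i) v"
      using q i m v by (intro not_stabilizes_line_by_coordinates[of v n q ?m])
        (auto simp: orth_short_root_mult_vec[OF n(1) i(1,2)])
    with orth_short_root_in_SO[OF n(1) i(1,2) two] show ?thesis by blast
  next
    case False
    then have z: "v $ j = 0" if "j < n" "j \<noteq> ?m" for j using that by blast
    from v obtain p where "p < n" "v $ p \<noteq> 0" by force
    then have vm: "v $ ?m \<noteq> 0" using z by (cases "p = ?m") auto
    have "\<not> stabilizes_line (orth_short_root n 0) v"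
      using m v vm z[of 0] z[of "n - 1"] two
      by (intro not_stabilizes_line_by_coordinates[of v n ?m 0])
        (auto simp: orth_short_root_mult_vec[OF n(1) _ m(2)])
    with orth_short_root_in_SO[OF n(1) _ m(2) two] m show ?thesis by auto
  qed
qed

lemma classical_group_stabilizes_no_line:
  fixes v :: "'a::field vec"
  assumes cd: "classical_data t n TYPE('a)" and v: "v \<in> carrier_vec n" "v \<noteq> 0\<^sub>v n"
  shows "\<exists>W\<in>classical_group t n. \<not> stabilizes_line W v"
proof (cases t)
  case Orthogonal
  then have n: "n \<ge> 3" "odd n \<longrightarrow> (2::'a) \<noteq> 0" using cd unfolding classical_data_def by simp_all
  show ?thesis
  proof (cases "even n")
    case True
    with n have "n \<ge> 4" by presburger
    with True show ?thesis unfolding Orthogonal using SO_even_stabilizes_no_line[OF _ _ v] by blast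
  next
    case False
    with n show ?thesis unfolding Orthogonal using SO_odd_stabilizes_no_line[OF _ _ _ v] by blast
  qed
qed (use assms SL_stabilizes_no_line Sp_stabilizes_no_line in \<open>auto simp: classical_data_def\<close>)

lemma classical_group_carrier: "classical_group t n \<subseteq> carrier_mat n n"
  unfolding classical_group_def by (cases t) auto

lemma conj_class_max_eigenspace:
  fixes g :: "'a::alg_closed_field mat"
  assumes G: "G \<subseteq> carrier_mat n n" and g: "g \<in> carrier_mat n n" and n: "n > 0"
    and x: "x \<in> conj_class n G g"
  shows "x \<in> carrier_mat n n \<and> (\<exists>lam. eigenspace_dim x lam = max_eigenspace_dim g)"
proof -
  obtain h h' where h: "h \<in> carrier_mat n n" "h' \<in> carrier_mat n n" "h * h' = 1\<^sub>m n"
    and xh: "x = h * g * h'"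
    using x G unfolding conj_class_def by blast
  obtain lam where "eigenspace_dim g lam = max_eigenspace_dim g"
    using max_eigenspace_dim_attained[OF g n] .
  then show ?thesis unfolding xh using eigenspace_dim_conj[OF g h] g h by auto
qed

theorem lemma3p6:
  fixes t :: classical_type and n e :: nat
    and g :: "nat \<Rightarrow> 'a::alg_closed_field mat"
    and x :: "nat \<Rightarrow> 'a mat"
  assumes "classical_data t n TYPE('a)"
    and "\<forall>i<e. g i \<in> classical_group t n"
    and "\<forall>i<e. x i \<in> conj_class n (classical_group t n) (g i)"
    and "(\<Sum>i<e. int (max_eigenspace_dim (g i))) > int n * (int e - 1)"
  shows "\<not> zariski_dense_in n (gen_subgroup n (x ` {..<e})) (classical_group t n)"
proof
  assume dense: "zariski_dense_in n (gen_subgroup n (x ` {..<e})) (classical_group t n)"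
  have "n > 0" using assms(1) unfolding classical_data_def by (cases t) auto
  then have "\<forall>i\<in>{..<e}. \<exists>lam. x i \<in> carrier_mat n n \<and> eigenspace_dim (x i) lam = max_eigenspace_dim (g i)"
    using assms(2,3) conj_class_max_eigenspace[OF classical_group_carrier] classical_group_carrier
    by blast
  then obtain lam where x: "\<And>i. i < e \<Longrightarrow> x i \<in> carrier_mat n n"
    and lam: "\<And>i. i < e \<Longrightarrow> eigenspace_dim (x i) (lam i) = max_eigenspace_dim (g i)"
    by (metis lessThan_iff)
  have "(\<Sum>i<e. int (eigenspace_dim (x i) (lam i))) > int n * (int e - 1)"
    using assms(4) lam by simp
  with x obtain v where v: "v \<in> carrier_vec n" "v \<noteq> 0\<^sub>v n" and "\<forall>i<e. x i *\<^sub>v v = lam i \<cdot>\<^sub>v v"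
    using common_eigenvector_of_large_eigenspaces[of e x n lam] by blast
  with x have "\<forall>B\<in>x ` {..<e}. B \<in> carrier_mat n n \<and> stabilizes_line B v"
    unfolding stabilizes_line_def by auto
  then have "\<forall>A\<in>gen_subgroup n (x ` {..<e}). stabilizes_line A v"
    using gen_subgroup_stabilizes_line v by blast
  then have "\<forall>W\<in>classical_group t n. stabilizes_line W v"
    using zariski_dense_stabilizes_line[OF dense classical_group_carrier v] by blast
  then show False using classical_group_stabilizes_no_line[OF assms(1) v] by blast
qed

end
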